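(* Let $\mathcal G$ be a strongly connected directed graph with no self loops, vertex set $\{1,\dots,n\}$ and edge set $\{1,\dots,m\}$. Let $B=S-D$ be its incidence matrix and let $W=\mathbf{1}z^\mathsf{T}$ be as in the context. Let $\omega^{\mathrm u}\in\mathbb{R}^n$ be constant. Consider the dynamics \[ \dot{\tilde\theta}(t)=\omega^{\mathrm u}+c(t),\qquad \tilde\beta(t)=B^\mathsf{T}\tilde\theta(t),\qquad y(t)=D\tilde\beta(t). \] Let $g$ be an edge with destination vertex $i=\mathrm{dst}(g)$. Suppose that for $t\in[t_1,t_2]$ the controller is \[ c(t)=q+k_2\,\mathrm{sign}\big(\tilde\beta_g(t)\big)\,e_i, \qquad\text{where } q=(W-I)\omega^{\mathrm u} \text{ and } k_2>0. \] Let $h=|\tilde\beta_g(t_1)|/k_2$ and assume $t_2>t_1+h$. Then \[ \tilde\beta(t_2)=(I+B^\mathsf{T}DE^g)\,\tilde\beta(t_1). \]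
   Context: The matrices $S,D\in\mathbb{R}^{n\times m}$ are defined by $S_{ie}=1$ if node $i$ is the source of edge $e$ and $0$ otherwise, and $D_{ie}=1$ if node $i$ is the destination of edge $e$ and $0$ otherwise. The vector $\mathbf{1}$ is the all-ones vector. The matrix $Q=DB^\mathsf{T}$ is an irreducible rate matrix. Let $z>0$ satisfy $z^\mathsf{T}Q=0$ and $\mathbf{1}^\mathsf{T}z=1$, and set $W=\mathbf{1}z^\mathsf{T}$. $e_i\in\mathbb{R}^n$ is the $i$-th standard basis vector. $E^g\in\mathbb{R}^{m\times m}$ is the matrix whose entries are all zero except $E^g_{gg}=1$. The convention $\mathrm{sign}(0)=0$ is used. *)

theory Defs
  imports "HOL-Analysis.Analysis"
begin

definition src_mat :: "('m \<Rightarrow> 'n) \<Rightarrow> real^'m^'n" where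
  "src_mat src = (\<chi> i e. if src e = i then 1 else 0)"

definition dst_mat :: "('m \<Rightarrow> 'n) \<Rightarrow> real^'m^'n" where
  "dst_mat dst = (\<chi> i e. if dst e = i then 1 else 0)"

definition incidence :: "('m \<Rightarrow> 'n) \<Rightarrow> ('m \<Rightarrow> 'n) \<Rightarrow> real^'m^'n" where
  "incidence src dst = src_mat src - dst_mat dst"

definition strongly_connected :: "('m::finite \<Rightarrow> 'n::finite) \<Rightarrow> ('m \<Rightarrow> 'n) \<Rightarrow> bool" where
  "strongly_connected src dst \<longleftrightarrow>
     (\<forall>u v. (u, v) \<in> (range (\<lambda>e. (src e, dst e)))\<^sup>*)"

definition rate_Q :: "('m::finite \<Rightarrow> 'n::finite) \<Rightarrow> ('m \<Rightarrow> 'n) \<Rightarrow> real^'n^'n" where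
  "rate_Q src dst = dst_mat dst ** transpose (incidence src dst)"

definition Wmat :: "real^'n \<Rightarrow> real^'n^'n" where
  "Wmat z = (\<chi> a b. z $ b)"

definition Emat :: "'m \<Rightarrow> real^'m^'m" where
  "Emat g = (\<chi> a b. if a = g \<and> b = g then 1 else 0)"

end

theory Submission
  imports Defs
begin

text \<open>Constant vectors lie in the kernel of \<open>B\<^sup>T\<close>, and \<open>\<omega>\<^sup>u + q = W \<omega>\<^sup>u\<close> is constant;
  hence \<open>\<dot>\<beta> = k\<^sub>2 sgn(\<beta>\<^sub>g) B\<^sup>T e\<^sub>i\<close>. As \<open>i\<close> is the head of \<open>g\<close>, the \<open>g\<close>-th entry of \<open>B\<^sup>T e\<^sub>i\<close> is
  \<open>-1\<close>, so \<open>\<beta>\<^sub>g\<close> obeys \<open>\<dot>\<beta>\<^sub>g = -k\<^sub>2 sgn \<beta>\<^sub>g\<close>: it reaches zero by time \<open>t\<^sub>1 + h\<close> and stays there.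
  Integrating, \<open>\<beta>(t\<^sub>2) - \<beta>(t\<^sub>1) = \<beta>\<^sub>g(t\<^sub>1) B\<^sup>T e\<^sub>i = B\<^sup>T D E\<^sup>g \<beta>(t\<^sub>1)\<close>.\<close>

lemma has_integral_subsegment_of_primitive:
  fixes F p :: "real \<Rightarrow> 'a::banach"
  assumes F: "\<forall>t\<in>{a..b}. (p has_integral (F t - F a)) {a..t}"
    and "a \<le> x" "x \<le> y" "y \<le> b"
  shows "(p has_integral (F y - F x)) {x..y}"
proof -
  have Fy: "(p has_integral (F y - F a)) {a..y}"
    using F assms(2-4) by simp
  have "p integrable_on {x..y}"
    by (rule integrable_subinterval_real[OF has_integral_integrable[OF Fy]])
      (use assms(2) in simp)
  then obtain j where j: "(p has_integral j) {x..y}"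
    by blast
  have "(p has_integral (F x - F a) + j) {a..y}"
    using has_integral_combine[OF \<open>a \<le> x\<close> \<open>x \<le> y\<close> _ j] F assms(2-4) by simp
  with Fy have "F y - F a = F x - F a + j"
    by (rule has_integral_unique)
  then have "j = F y - F x"
    by (simp add: algebra_simps eq_diff_eq)
  with j show ?thesis
    by simp
qed

lemma continuous_on_primitive:
  fixes F p :: "real \<Rightarrow> 'a::banach"
  assumes F: "\<forall>t\<in>{a..b}. (p has_integral (F t - F a)) {a..t}"
  shows "continuous_on {a..b} F"
proof (cases "a \<le> b")
  case True
  then have "p integrable_on {a..b}"
    using has_integral_integrable[OF F[rule_format, of b]] by simp
  then have "continuous_on {a..b} (\<lambda>t. F a + integral {a..t} p)"
    by (intro continuous_on_add continuous_on_const indefinite_integral_continuous_1)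
  moreover have "F a + integral {a..t} p = F t" if "t \<in> {a..b}" for t
    using integral_unique[OF F[rule_format, OF that]] by simp
  ultimately show ?thesis
    by (rule continuous_on_eq)
qed simp

lemma sgn_eq_if_continuous_nonzero:
  fixes f :: "real \<Rightarrow> real"
  assumes cont: "continuous_on {x..y} f" and "x \<le> y"
    and nz: "\<forall>s\<in>{x..y}. f s \<noteq> 0"
  shows "sgn (f x) = sgn (f y)"
proof (rule ccontr)
  assume "sgn (f x) \<noteq> sgn (f y)"
  moreover have "f x \<noteq> 0" "f y \<noteq> 0"
    using nz \<open>x \<le> y\<close> by auto
  ultimately consider "f x < 0" "0 < f y" | "f y < 0" "0 < f x"
    by (metis linorder_neqE_linordered_idom sgn_neg sgn_pos)
  then obtain s where "x \<le> s" "s \<le> y" "f s = 0"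
  proof cases
    case 1
    then show ?thesis
      using IVT'[of f x 0 y, OF _ _ \<open>x \<le> y\<close> cont] that by force
  next
    case 2
    then show ?thesis
      using IVT2'[of f y 0 x, OF _ _ \<open>x \<le> y\<close> cont] that by force
  qed
  with nz show False
    by simp
qed

lemma sgn_flow_abs_between_zeros:
  fixes f :: "real \<Rightarrow> real"
  assumes flow: "((\<lambda>s. - k * sgn (f s)) has_integral (f y - f x)) {x..y}"
    and cont: "continuous_on {x..y} f" and "x < y"
    and nz: "\<forall>s\<in>{x<..y}. f s \<noteq> 0"
  shows "\<bar>f y\<bar> = sgn (f y) * f x - k * (y - x)"
proof -
  have same_sgn: "sgn (f s) = sgn (f y)" if "s \<in> {x..y} - {x}" for s
  proof -
    have "continuous_on {s..y} f"
      using continuous_on_subset[OF cont, of "{s..y}"] that by simp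
    then show ?thesis
      using sgn_eq_if_continuous_nonzero[of s y f] that nz by simp
  qed
  have "((\<lambda>s. - k * sgn (f y)) has_integral (y - x) * (- k * sgn (f y))) {x..y}"
    using has_integral_const_real[of "- k * sgn (f y)" x y] \<open>x < y\<close> by simp
  then have "((\<lambda>s. - k * sgn (f s)) has_integral (y - x) * (- k * sgn (f y))) {x..y}"
    by (rule has_integral_spike_finite[of "{x}", rotated 2]) (simp, metis same_sgn)
  with flow have eq: "f y - f x = (y - x) * (- k * sgn (f y))"
    by (rule has_integral_unique)
  have "sgn (f y) * (f y - f x) = - k * (y - x) * (sgn (f y) * sgn (f y))"
    by (simp add: eq)
  moreover have "f y \<noteq> 0"
    using nz \<open>x < y\<close> by simp
  ultimately show ?thesis
    by (simp add: abs_sgn algebra_simps)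
qed

lemma obtain_last_zero:
  fixes f :: "real \<Rightarrow> 'a::{t1_space, zero}"
  assumes cont: "continuous_on {a..b} f" and "f b \<noteq> 0"
    and "z \<in> {a..b}" "f z = 0"
  obtains c where "a \<le> c" "c < b" "f c = 0" "\<forall>s\<in>{c<..b}. f s \<noteq> 0"
proof -
  define Z where "Z = {s \<in> {a..b}. f s = 0}"
  have "closed Z"
    unfolding Z_def by (rule continuous_closed_preimage_constant[OF cont closed_atLeastAtMost])
  moreover have bdd: "bdd_above Z"
    unfolding Z_def by (auto intro: bdd_aboveI[of _ b])
  moreover have "Z \<noteq> {}"
    using assms(3,4) by (auto simp: Z_def)
  ultimately have "Sup Z \<in> Z"
    using closed_contains_Sup by blast
  then have "a \<le> Sup Z" "Sup Z \<le> b" "f (Sup Z) = 0"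
    by (auto simp: Z_def)
  moreover from this \<open>f b \<noteq> 0\<close> have "Sup Z < b"
    by (cases "Sup Z = b") auto
  moreover have "f s \<noteq> 0" if "s \<in> {Sup Z<..b}" for s
  proof
    assume "f s = 0"
    then have "s \<in> Z"
      using that \<open>a \<le> Sup Z\<close> by (simp add: Z_def)
    then have "s \<le> Sup Z"
      using cSup_upper[OF _ bdd] by blast
    with that show False
      by simp
  qed
  ultimately show ?thesis
    using that by blast
qed

lemma sgn_flow_reaches_zero:
  fixes f :: "real \<Rightarrow> real"
  assumes flow: "\<forall>t\<in>{a..b}. ((\<lambda>s. - k * sgn (f s)) has_integral (f t - f a)) {a..t}"
    and "k > 0" and late: "b > a + \<bar>f a\<bar> / k"
  shows "f b = 0"
proof (rule ccontr)
  assume fb: "f b \<noteq> 0"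
  have "0 \<le> \<bar>f a\<bar> / k"
    using \<open>k > 0\<close> by simp
  with late have "a < b"
    by linarith
  have cont: "continuous_on {a..b} f"
    using continuous_on_primitive[OF flow] .
  have abs_fb: "\<bar>f b\<bar> = sgn (f b) * f x - k * (b - x)"
    if "a \<le> x" "x < b" "\<forall>s\<in>{x<..b}. f s \<noteq> 0" for x
  proof -
    have "((\<lambda>s. - k * sgn (f s)) has_integral (f b - f x)) {x..b}"
      using has_integral_subsegment_of_primitive[OF flow, of x b] that by simp
    moreover have "continuous_on {x..b} f"
      using continuous_on_subset[OF cont] that by simp
    ultimately show ?thesis
      using sgn_flow_abs_between_zeros that(2,3) by blast
  qed
  show False
  proof (cases "\<exists>z\<in>{a..b}. f z = 0")
    case True
    then obtain c where "a \<le> c" "c < b" "f c = 0" "\<forall>s\<in>{c<..b}. f s \<noteq> 0"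
      using obtain_last_zero[OF cont fb] by blast
    then have "\<bar>f b\<bar> = - k * (b - c)"
      using abs_fb[of c] by simp
    moreover have "k * (b - c) > 0"
      using \<open>c < b\<close> \<open>k > 0\<close> by simp
    ultimately show False
      by simp
  next
    case False
    then have nz: "\<forall>s\<in>{a..b}. f s \<noteq> 0"
      by blast
    then have "sgn (f b) = sgn (f a)"
      using sgn_eq_if_continuous_nonzero[OF cont] \<open>a < b\<close> by auto
    with abs_fb[of a] nz \<open>a < b\<close> have "\<bar>f b\<bar> = \<bar>f a\<bar> - k * (b - a)"
      by (simp add: abs_sgn mult.commute)
    moreover have "k * (b - a) > \<bar>f a\<bar>"
      using late \<open>k > 0\<close> by (simp add: field_simps)
    ultimately show False
      by simp
  qed
qed

lemma sgn_flow_along_direction: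
  fixes \<beta> :: "real \<Rightarrow> real^'m" and u :: "real^'m"
  assumes flow: "\<forall>t\<in>{a..b}. ((\<lambda>s. (k * sgn (\<beta> s $ g)) *\<^sub>R u) has_integral (\<beta> t - \<beta> a)) {a..t}"
    and u: "u $ g = -1" and "k > 0" and late: "b > a + \<bar>\<beta> a $ g\<bar> / k"
  shows "\<beta> b = \<beta> a + \<beta> a $ g *\<^sub>R u"
proof -
  define f where "f t = \<beta> t $ g" for t
  have f_flow: "((\<lambda>s. - k * sgn (f s)) has_integral (f t - f a)) {a..t}" if "t \<in> {a..b}" for t
    using has_integral_linear[OF flow[rule_format, OF that] bounded_linear_vec_nth[of g]] u
    by (simp add: o_def f_def)
  have late_f: "b > a + \<bar>f a\<bar> / k"
    using late by (simp add: f_def)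
  then have "f b = 0"
    using sgn_flow_reaches_zero[of a b k f] f_flow \<open>k > 0\<close> by blast
  have "0 \<le> \<bar>f a\<bar> / k"
    using \<open>k > 0\<close> by simp
  with late_f have "a \<le> b"
    by linarith
  with \<open>f b = 0\<close> have "((\<lambda>s. k * sgn (f s)) has_integral f a) {a..b}"
    using has_integral_neg[OF f_flow[of b]] by simp
  then have "((\<lambda>s. (k * sgn (\<beta> s $ g)) *\<^sub>R u) has_integral f a *\<^sub>R u) {a..b}"
    unfolding f_def by (rule has_integral_scaleR_left)
  moreover have "((\<lambda>s. (k * sgn (\<beta> s $ g)) *\<^sub>R u) has_integral \<beta> b - \<beta> a) {a..b}"
    using flow \<open>a \<le> b\<close> by simp
  ultimately have "f a *\<^sub>R u = \<beta> b - \<beta> a"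
    by (rule has_integral_unique)
  then show ?thesis
    by (simp add: f_def algebra_simps)
qed

lemma has_integral_matrix_vector_mult:
  fixes A :: "real^'n^'m" and \<phi> :: "'k::euclidean_space \<Rightarrow> real^'n"
  assumes "(\<phi> has_integral I) S"
  shows "((\<lambda>s. A *v \<phi> s) has_integral A *v I) S"
  using has_integral_linear[OF assms matrix_vector_mul_bounded_linear[of A]] by (simp add: o_def)

lemma transpose_incidence_nth:
  "transpose (incidence src dst) $ e $ j
     = (if src e = j then 1 else 0) - (if dst e = j then 1 else 0)"
  by (simp add: incidence_def src_mat_def dst_mat_def transpose_def)

lemma transpose_incidence_mult_const:
  fixes src dst :: "'m::finite \<Rightarrow> 'n::finite"
  shows "transpose (incidence src dst) *v (\<chi> j. C) = 0"
  by (simp add: vec_eq_iff matrix_vector_mult_def transpose_incidence_nth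
      left_diff_distrib sum_subtractf mult_if_delta del: transpose_matrix_vector)

lemma Wmat_mult: "Wmat z *v x = (\<chi> j. z \<bullet> x)"
  by (simp add: Wmat_def matrix_vector_mult_def inner_vec_def vec_eq_iff)

lemma transpose_incidence_mult_Wmat_input:
  fixes src dst :: "'m::finite \<Rightarrow> 'n::finite"
  shows "transpose (incidence src dst) *v (\<omega> + ((Wmat z - mat 1) *v \<omega> + a *\<^sub>R v))
           = a *\<^sub>R (transpose (incidence src dst) *v v)"
  by (simp add: Wmat_mult matrix_vector_mult_diff_rdistrib matrix_vector_right_distrib
      matrix_vector_mult_scaleR transpose_incidence_mult_const del: transpose_matrix_vector)

lemma transpose_incidence_mult_axis_dst:
  fixes src dst :: "'m::finite \<Rightarrow> 'n::finite"
  assumes "src g \<noteq> dst g"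
  shows "(transpose (incidence src dst) *v axis (dst g) 1) $ g = -1"
  using assms
  by (simp add: matrix_vector_mult_def axis_def transpose_incidence_nth if_distrib cong: if_cong)

lemma Emat_mult: "Emat g *v x = x $ g *\<^sub>R axis g 1"
  by (auto simp: Emat_def vec_eq_iff matrix_vector_mult_def axis_def mult_if_delta)

lemma dst_mat_mult_axis:
  fixes dst :: "'m::finite \<Rightarrow> 'n::finite"
  shows "dst_mat dst *v axis g 1 = axis (dst g) 1"
  by (auto simp: dst_mat_def vec_eq_iff matrix_vector_mult_def axis_def if_distrib[of "(*) _"]
      cong: if_cong)

lemma edge_reset_mult:
  fixes src dst :: "'m::finite \<Rightarrow> 'n::finite"
  shows "(mat 1 + transpose (incidence src dst) ** dst_mat dst ** Emat g) *v x
           = x + x $ g *\<^sub>R (transpose (incidence src dst) *v axis (dst g) 1)"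
  by (simp add: matrix_vector_mult_add_rdistrib matrix_vector_mul_assoc[symmetric]
      Emat_mult dst_mat_mult_axis matrix_vector_mult_scaleR)

theorem lemma1:
  fixes src dst :: "'m::finite \<Rightarrow> 'n::finite"
    and z omega :: "real^'n"
    and theta c :: "real \<Rightarrow> real^'n"
    and g :: 'm and k2 t1 t2 :: real
  defines "B \<equiv> incidence src dst"
    and "D \<equiv> dst_mat dst"
    and "i \<equiv> dst g"
    and "q \<equiv> (Wmat z - mat 1) *v omega"
    and "beta \<equiv> (\<lambda>t. transpose (incidence src dst) *v theta t)"
    and "h \<equiv> \<bar>(transpose (incidence src dst) *v theta t1) $ g\<bar> / k2"
  assumes no_loops: "\<forall>e. src e \<noteq> dst e"
    and sc: "strongly_connected src dst"
    and z_pos: "\<forall>j. z $ j > 0"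
    and z_stat: "z v* rate_Q src dst = 0"
    and z_sum: "sum (\<lambda>j. z $ j) UNIV = 1"
    and dyn: "\<forall>t\<in>{t1..t2}. ((\<lambda>s. omega + c s) has_integral (theta t - theta t1)) {t1..t}"
    and ctrl: "\<forall>t\<in>{t1..t2}. c t = q + (k2 * sgn (beta t $ g)) *\<^sub>R axis i 1"
    and k2: "k2 > 0"
    and t2: "t2 > t1 + h"
  shows "beta t2 = (mat 1 + transpose B ** D ** Emat g) *v beta t1"
proof -
  define u where "u = transpose B *v axis i 1"
  have "((\<lambda>s. (k2 * sgn (beta s $ g)) *\<^sub>R u) has_integral (beta t - beta t1)) {t1..t}"
    if t: "t \<in> {t1..t2}" for t
  proof -
    have "((\<lambda>s. transpose B *v (omega + c s)) has_integral (beta t - beta t1)) {t1..t}"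
      using has_integral_matrix_vector_mult[OF dyn[rule_format, OF t], of "transpose B"]
      by (simp add: beta_def B_def matrix_vector_mult_diff_distrib del: transpose_matrix_vector)
    moreover have "transpose B *v (omega + c s) = (k2 * sgn (beta s $ g)) *\<^sub>R u"
      if "s \<in> {t1..t}" for s
      using ctrl t that
      by (simp add: q_def B_def u_def transpose_incidence_mult_Wmat_input del: transpose_matrix_vector)
    ultimately show ?thesis
      by (rule has_integral_eq[rotated])
  qed
  moreover have "u $ g = -1"
    using transpose_incidence_mult_axis_dst[of src g dst] no_loops
    by (simp add: u_def B_def i_def)
  moreover have "t2 > t1 + \<bar>beta t1 $ g\<bar> / k2"
    using t2 by (simp add: h_def beta_def)
  ultimately have "beta t2 = beta t1 + beta t1 $ g *\<^sub>R u"
    using sgn_flow_along_direction[of t1 t2 k2 beta g u] k2 by blast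
  then show ?thesis
    by (simp only: edge_reset_mult B_def D_def u_def i_def)
qed

end
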